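(* Let $n\ge2$, let $m\ge 3$ be odd, let $\mathcal{A}$ be an $m$th order $n$-dimensional strong Hankel tensor, and let $x=(x_1,\dots,x_n)^\top$ be a Z-eigenvector of $\mathcal{A}$ associated with a Z-eigenvalue $\lambda$. If $\lambda>0$, then $x_i\ge 0$ for all odd $i$; if $\lambda<0$, then $x_i\le0$ for all odd $i$.
   Context: $\mathcal{A}=(a_{i_1\cdots i_m})$ is a Hankel tensor if $a_{i_1\cdots i_m}=v_{i_1+\cdots+i_m-m}$ for some real $v=(v_0,\dots,v_{(n-1)m})^\top$. Let $N=\lceil((n-1)m+2)/2\rceil$; an associated Hankel matrix of $\mathcal{A}$ is the $N\times N$ matrix with $(i,j)$ entry $v_{i+j-2}$, where, if $(n-1)m$ is odd, $v_{2\lceil(n-1)m/2\rceil}$ is an additional (arbitrary) real number. $\mathcal{A}$ is a strong Hankel tensor if an associated Hankel matrix is positive semi-definite. $\mathcal{A}x^{m-1}$ is the vector with $i$th component $\sum_{i_2,\dots,i_m=1}^n a_{ii_2\cdots i_m}x_{i_2}\cdots x_{i_m}$. A real $\lambda$ is a Z-eigenvalue with Z-eigenvector $x\in\mathbb{R}^n$ if $x^\top x=1$ and $\mathcal{A}x^{m-1}=\lambda x$. *)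

theory Defs
  imports "HOL-Analysis.Analysis"
begin

text \<open>An m-th order n-dimensional real tensor is represented as a function on
index lists; only lists of length m with entries in {1..n} are relevant.
Vectors in R^n are functions nat => real, relevant on {1..n}.\<close>

type_synonym tensor = "nat list \<Rightarrow> real"

definition index_lists :: "nat \<Rightarrow> nat \<Rightarrow> nat list set" where
  "index_lists n k = {is. length is = k \<and> set is \<subseteq> {1..n}}"

definition hankel_generated :: "nat \<Rightarrow> nat \<Rightarrow> tensor \<Rightarrow> (nat \<Rightarrow> real) \<Rightarrow> bool" where
  "hankel_generated n m A v \<longleftrightarrow> (\<forall>is \<in> index_lists n m. A is = v (sum_list is - m))"

definition is_hankel_tensor :: "nat \<Rightarrow> nat \<Rightarrow> tensor \<Rightarrow> bool" where
  "is_hankel_tensor n m A \<longleftrightarrow> (\<exists>v. hankel_generated n m A v)"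

definition hankel_size :: "nat \<Rightarrow> nat \<Rightarrow> nat" where
  "hankel_size n m = nat \<lceil>(real ((n - 1) * m) + 2) / 2\<rceil>"

definition psd_matrix :: "nat \<Rightarrow> (nat \<Rightarrow> nat \<Rightarrow> real) \<Rightarrow> bool" where
  "psd_matrix N H \<longleftrightarrow> (\<forall>y :: nat \<Rightarrow> real. (\<Sum>i=1..N. \<Sum>j=1..N. y i * H i j * y j) \<ge> 0)"

text \<open>The generating vector v is only constrained on 0..(n-1)m by the tensor; when
(n-1)m is odd, v at index 2*ceil((n-1)m/2) = (n-1)m+1 is the additional arbitrary
real number.\<close>
definition strong_hankel_tensor :: "nat \<Rightarrow> nat \<Rightarrow> tensor \<Rightarrow> bool" where
  "strong_hankel_tensor n m A \<longleftrightarrow>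
     (\<exists>v. hankel_generated n m A v \<and>
          psd_matrix (hankel_size n m) (\<lambda>i j. v (i + j - 2)))"

definition tensor_apply :: "nat \<Rightarrow> nat \<Rightarrow> tensor \<Rightarrow> (nat \<Rightarrow> real) \<Rightarrow> nat \<Rightarrow> real" where
  "tensor_apply n m A x i = (\<Sum>is \<in> index_lists n (m - 1). A (i # is) * prod_list (map x is))"

definition Z_eigenpair :: "nat \<Rightarrow> nat \<Rightarrow> tensor \<Rightarrow> real \<Rightarrow> (nat \<Rightarrow> real) \<Rightarrow> bool" where
  "Z_eigenpair n m A lam x \<longleftrightarrow>
     (\<Sum>i=1..n. x i ^ 2) = 1 \<and> (\<forall>i\<in>{1..n}. tensor_apply n m A x i = lam * x i)"

end

theory Submission
  imports Defs
begin

text \<open>Write \<open>m = 2q + 1\<close> and let \<open>i = 2r + 1\<close> be odd. Splitting each index list of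
length \<open>m - 1\<close> into two halves of length \<open>q\<close> turns \<open>(\<A>x\<^sup>m\<^sup>-\<^sup>1)\<^sub>i\<close> into
\<open>\<Sum>\<^sub>\<alpha>\<^sub>,\<^sub>\<beta> x\<^sup>\<alpha> x\<^sup>\<beta> v(i - m + |\<alpha>| + |\<beta>|)\<close> (with \<open>|\<alpha>|\<close> the entry sum of \<open>\<alpha>\<close>), and grouping the monomials \<open>x\<^sup>\<alpha>\<close> by
\<open>r + |\<alpha>| - q + 1\<close> exhibits this as \<open>y\<^sup>T H y\<close> for the associated Hankel matrix \<open>H\<close>.
Hence \<open>(\<A>x\<^sup>m\<^sup>-\<^sup>1)\<^sub>i \<ge> 0\<close>, so \<open>\<lambda> x\<^sub>i \<ge> 0\<close> for every odd \<open>i\<close>.\<close>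

lemma psd_matrix_grouped_nonneg:
  assumes "psd_matrix N H" and "finite L" and "f ` L \<subseteq> {1..N}"
  shows "0 \<le> (\<Sum>a\<in>L. \<Sum>b\<in>L. c a * c b * H (f a) (f b))"
proof -
  define y where "y k = (\<Sum>a\<in>{a\<in>L. f a = k}. c a)" for k
  have group: "(\<Sum>a\<in>L. g a) = (\<Sum>k=1..N. \<Sum>a\<in>{a\<in>L. f a = k}. g a)" for g :: "_ \<Rightarrow> real"
    by (rule sum.group[OF assms(2) finite_atLeastAtMost assms(3), symmetric])
  have "(\<Sum>a\<in>L. \<Sum>b\<in>L. c a * c b * H (f a) (f b))
      = (\<Sum>k=1..N. \<Sum>a\<in>{a\<in>L. f a = k}. \<Sum>l=1..N. \<Sum>b\<in>{b\<in>L. f b = l}.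
           c a * c b * H (f a) (f b))"
    by (simp only: group)
  also have "\<dots> = (\<Sum>k=1..N. \<Sum>a\<in>{a\<in>L. f a = k}. \<Sum>l=1..N. \<Sum>b\<in>{b\<in>L. f b = l}.
           c a * c b * H k l)"
    by (intro sum.cong refl) auto
  also have "\<dots> = (\<Sum>k=1..N. \<Sum>l=1..N. \<Sum>a\<in>{a\<in>L. f a = k}. \<Sum>b\<in>{b\<in>L. f b = l}.
           c a * c b * H k l)"
    by (rule sum.cong[OF refl], rule sum.swap)
  also have "\<dots> = (\<Sum>k=1..N. \<Sum>l=1..N. y k * H k l * y l)"
  proof (intro sum.cong refl)
    fix k l
    have "y k * y l * H k l
        = (\<Sum>a\<in>{a\<in>L. f a = k}. \<Sum>b\<in>{b\<in>L. f b = l}. c a * c b * H k l)"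
      unfolding y_def sum_product by (simp add: sum_distrib_right)
    then show "(\<Sum>a\<in>{a\<in>L. f a = k}. \<Sum>b\<in>{b\<in>L. f b = l}. c a * c b * H k l)
        = y k * H k l * y l"
      by (simp add: mult_ac)
  qed
  finally show ?thesis
    using assms(1) unfolding psd_matrix_def by simp
qed

lemma finite_index_lists: "finite (index_lists n k)"
  using finite_lists_length_eq[of "{1..n}" k] unfolding index_lists_def by (simp add: conj_commute)

lemma index_lists_add:
  "index_lists n (a + b) = (\<lambda>(p, q). p @ q) ` (index_lists n a \<times> index_lists n b)"
proof
  show "index_lists n (a + b) \<subseteq> (\<lambda>(p, q). p @ q) ` (index_lists n a \<times> index_lists n b)"
  proof
    fix xs assume "xs \<in> index_lists n (a + b)"
    then have "take a xs \<in> index_lists n a" "drop a xs \<in> index_lists n b"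
      unfolding index_lists_def by (auto dest: in_set_takeD in_set_dropD)
    then show "xs \<in> (\<lambda>(p, q). p @ q) ` (index_lists n a \<times> index_lists n b)"
      by (intro image_eqI[of _ _ "(take a xs, drop a xs)"]) auto
  qed
qed (fastforce simp: index_lists_def)

lemma inj_on_append_index_lists:
  "inj_on (\<lambda>(p, q). p @ q) (index_lists n a \<times> index_lists n b)"
  by (auto simp: inj_on_def index_lists_def)

lemma index_lists_sum_list_bounds:
  assumes "as \<in> index_lists n k"
  shows "k \<le> sum_list as" and "sum_list as \<le> n * k"
proof -
  have "set as \<subseteq> {1..n} \<Longrightarrow> length as \<le> sum_list as \<and> sum_list as \<le> n * length as"
    by (induction as) auto
  then show "k \<le> sum_list as" "sum_list as \<le> n * k"
    using assms unfolding index_lists_def by auto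
qed

lemma le_hankel_size:
  assumes "2 * j \<le> (n - 1) * m + 2"
  shows "j \<le> hankel_size n m"
proof -
  have "real (2 * j) \<le> real ((n - 1) * m + 2)"
    using assms by (simp only: of_nat_le_iff)
  then have "real j \<le> (real ((n - 1) * m) + 2) / 2"
    by simp
  then show ?thesis
    unfolding hankel_size_def by linarith
qed

lemma tensor_apply_hankel_split:
  assumes "hankel_generated n (2 * q + 1) A v" and "i \<in> {1..n}"
  shows "tensor_apply n (2 * q + 1) A x i
       = (\<Sum>as\<in>index_lists n q. \<Sum>bs\<in>index_lists n q.
            prod_list (map x as) * prod_list (map x bs)
              * v (i + sum_list as + sum_list bs - (2 * q + 1)))"
proof -
  have hankel: "A (i # js) = v (i + sum_list js - (2 * q + 1))"
    if "js \<in> index_lists n (q + q)" for js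
    using assms that unfolding hankel_generated_def index_lists_def by auto
  have "tensor_apply n (2 * q + 1) A x i
      = (\<Sum>js\<in>index_lists n (q + q). A (i # js) * prod_list (map x js))"
    unfolding tensor_apply_def by (simp add: mult_2)
  also have "\<dots> = (\<Sum>js\<in>index_lists n (q + q).
                    prod_list (map x js) * v (i + sum_list js - (2 * q + 1)))"
    by (intro sum.cong refl) (simp add: hankel)
  also have "\<dots> = (\<Sum>(as, bs)\<in>index_lists n q \<times> index_lists n q.
                    prod_list (map x (as @ bs)) * v (i + sum_list (as @ bs) - (2 * q + 1)))"
    unfolding index_lists_add by (subst sum.reindex[OF inj_on_append_index_lists]) (simp add: case_prod_unfold)
  finally show ?thesis
    by (simp add: sum.cartesian_product add.assoc)
qed

lemma strong_hankel_tensor_apply_odd_nonneg: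
  assumes "strong_hankel_tensor n m A" and "odd m" and "i \<in> {1..n}" and "odd i"
  shows "0 \<le> tensor_apply n m A x i"
proof -
  obtain v where hg: "hankel_generated n m A v"
    and psd: "psd_matrix (hankel_size n m) (\<lambda>k l. v (k + l - 2))"
    using assms(1) unfolding strong_hankel_tensor_def by blast
  obtain q where m: "m = 2 * q + 1" using \<open>odd m\<close> oddE by blast
  obtain r where i: "i = 2 * r + 1" using \<open>odd i\<close> oddE by blast
  define L where "L = index_lists n q"
  define f where "f as = r + sum_list as - q + 1" for as
  have bounds: "q \<le> sum_list as" "sum_list as \<le> n * q" if "as \<in> L" for as
    using index_lists_sum_list_bounds that unfolding L_def by auto
  have shift: "f as + f bs - 2 = i + sum_list as + sum_list bs - m"
    if "as \<in> L" "bs \<in> L" for as bs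
    using bounds(1)[OF that(1)] bounds(1)[OF that(2)] unfolding f_def i m by simp
  have "f as \<le> hankel_size n m" if "as \<in> L" for as
  proof (rule le_hankel_size)
    have "2 * r \<le> n - 1" "q \<le> n * q" using assms(3) i by auto
    then show "2 * f as \<le> (n - 1) * m + 2"
      using bounds(2)[OF that] unfolding f_def m by (simp add: algebra_simps diff_mult_distrib)
  qed
  then have "f ` L \<subseteq> {1..hankel_size n m}"
    unfolding f_def by auto
  from psd_matrix_grouped_nonneg[OF psd _ this, of "\<lambda>as. prod_list (map x as)"]
  have "0 \<le> (\<Sum>as\<in>L. \<Sum>bs\<in>L. prod_list (map x as) * prod_list (map x bs)
                                  * v (f as + f bs - 2))"
    unfolding L_def using finite_index_lists by blast
  also have "\<dots> = tensor_apply n m A x i"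
    unfolding m tensor_apply_hankel_split[OF hg[unfolded m] assms(3)]
    unfolding L_def[symmetric] by (intro sum.cong refl) (simp add: shift m)
  finally show ?thesis .
qed

theorem proposition6:
  fixes n m :: nat and A :: tensor and lam :: real and x :: "nat \<Rightarrow> real"
  assumes "n \<ge> 2" and "m \<ge> 3" and "odd m"
    and "strong_hankel_tensor n m A"
    and "Z_eigenpair n m A lam x"
  shows "(lam > 0 \<longrightarrow> (\<forall>i\<in>{1..n}. odd i \<longrightarrow> x i \<ge> 0)) \<and>
         (lam < 0 \<longrightarrow> (\<forall>i\<in>{1..n}. odd i \<longrightarrow> x i \<le> 0))"
proof -
  have "0 \<le> lam * x i" if "i \<in> {1..n}" "odd i" for i
    using strong_hankel_tensor_apply_odd_nonneg[OF assms(4,3) that, of x] assms(5) that(1)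
    unfolding Z_eigenpair_def by simp
  then show ?thesis
    by (auto simp: zero_le_mult_iff)
qed

end
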